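(* Let $A=[a_1,\ldots,a_n]$ and $B=[b_1,\ldots,b_n]$ be matrices in $\mathbb{R}^{m,n}$ whose columns have Euclidean norm $1$, and suppose $\mathcal{M}_D(A,B)\ne 1$. Then \[ \mathcal{M}(A+B)\le\frac{\mathcal{M}(A)+2\mathcal{M}_{OD}(A,B)+\mathcal{M}(B)}{2\bigl(1-\mathcal{M}_D(A,B)\bigr)}. \]
   Context: For $C=[c_1,\ldots,c_n]$ with columns of norm $1$, the mutual incoherence is $\mathcal{M}(C)=\max_{i\ne j}|\langle c_i,c_j\rangle|$. For $A+B$, whose columns $a_i+b_i$ are nonzero but not necessarily normalized, $\mathcal{M}(A+B)$ means the mutual incoherence of the column-normalized matrix, i.e. $\max_{i\ne j}\frac{|\langle a_i+b_i,a_j+b_j\rangle|}{\|a_i+b_i\|_2\|a_j+b_j\|_2}$. The off-diagonal mutual incoherence is $\mathcal{M}_{OD}(A,B)=\max_{i\ne j}|\langle a_i,b_j\rangle|$ and the diagonal mutual incoherence is $\mathcal{M}_D(A,B)=\max_i|\langle a_i,b_i\rangle|$. *)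

theory Defs
  imports "HOL-Analysis.Analysis"
begin

text \<open>Matrices in R^{m x n} are represented as real^'n^'m; columns are column j C.
  Maxima over the pairs i \<noteq> j include 0, so that the empty case (n = 1) gives 0.\<close>

definition mutual_incoherence :: "real^'n::finite^'m::finite \<Rightarrow> real" where
  "mutual_incoherence C =
     Max ({0} \<union> {\<bar>column i C \<bullet> column j C\<bar> / (norm (column i C) * norm (column j C)) | i j. i \<noteq> j})"

definition offdiag_mutual_incoherence :: "real^'n::finite^'m::finite \<Rightarrow> real^'n^'m \<Rightarrow> real" where
  "offdiag_mutual_incoherence A B =
     Max ({0} \<union> {\<bar>column i A \<bullet> column j B\<bar> | i j. i \<noteq> j})"

definition diag_mutual_incoherence :: "real^'n::finite^'m::finite \<Rightarrow> real^'n^'m \<Rightarrow> real" where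
  "diag_mutual_incoherence A B = Max {\<bar>column i A \<bullet> column i B\<bar> | i. True}"

end

theory Submission
  imports Defs
begin

text \<open>Expanding the inner product, the numerator
  \<open>\<bar>(a\<^sub>i + b\<^sub>i) \<bullet> (a\<^sub>j + b\<^sub>j)\<bar>\<close> is at most
  \<open>\<bar>a\<^sub>i \<bullet> a\<^sub>j\<bar> + \<bar>a\<^sub>i \<bullet> b\<^sub>j\<bar> + \<bar>a\<^sub>j \<bullet> b\<^sub>i\<bar> + \<bar>b\<^sub>i \<bullet> b\<^sub>j\<bar>
  \<le> M(A) + 2 M\<^sub>O\<^sub>D(A,B) + M(B)\<close>, while for unit columns
  \<open>\<parallel>a\<^sub>i + b\<^sub>i\<parallel>\<^sup>2 = 2 + 2 a\<^sub>i \<bullet> b\<^sub>i \<ge> 2(1 - M\<^sub>D(A,B))\<close>, so each of the two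
  norms in the denominator is at least \<open>\<surd>(2(1 - M\<^sub>D(A,B)))\<close>.\<close>

lemma column_add: "column i (A + B) = column i A + column i (B::real^'n::finite^'m::finite)"
  by (simp add: column_def vec_eq_iff)

lemma finite_setcompr_pairs: "finite {f i j | (i::'a::finite) (j::'b::finite). P i j}"
proof -
  have "{f i j | i j. P i j} \<subseteq> (\<lambda>(i, j). f i j) ` UNIV" by auto
  then show ?thesis by (rule finite_subset) simp
qed

lemma finite_setcompr_single: "finite {u. \<exists>i::'a::finite. u = f i}"
proof -
  have "{u. \<exists>i. u = f i} \<subseteq> f ` UNIV" by auto
  then show ?thesis by (rule finite_subset) simp
qed

lemma mutual_incoherence_nonneg: "0 \<le> mutual_incoherence C"
  unfolding mutual_incoherence_def by (rule Max_ge) (auto simp: finite_setcompr_pairs)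

lemma abs_inner_div_le_mutual_incoherence:
  "i \<noteq> j \<Longrightarrow> \<bar>column i C \<bullet> column j C\<bar> / (norm (column i C) * norm (column j C))
     \<le> mutual_incoherence C"
  unfolding mutual_incoherence_def by (rule Max_ge) (auto simp: finite_setcompr_pairs)

lemma mutual_incoherence_le:
  assumes "0 \<le> c"
    and "\<And>i j. i \<noteq> j \<Longrightarrow>
      \<bar>column i C \<bullet> column j C\<bar> / (norm (column i C) * norm (column j C)) \<le> c"
  shows "mutual_incoherence C \<le> c"
  unfolding mutual_incoherence_def using assms by (auto simp: finite_setcompr_pairs)

lemma abs_inner_le_mutual_incoherence:
  assumes "\<forall>i. norm (column i C) = 1" and "i \<noteq> j"
  shows "\<bar>column i C \<bullet> column j C\<bar> \<le> mutual_incoherence C"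
  using abs_inner_div_le_mutual_incoherence[OF \<open>i \<noteq> j\<close>, of C] assms(1) by simp

lemma offdiag_mutual_incoherence_nonneg: "0 \<le> offdiag_mutual_incoherence A B"
  unfolding offdiag_mutual_incoherence_def by (rule Max_ge) (auto simp: finite_setcompr_pairs)

lemma abs_inner_le_offdiag_mutual_incoherence:
  "i \<noteq> j \<Longrightarrow> \<bar>column i A \<bullet> column j B\<bar> \<le> offdiag_mutual_incoherence A B"
  unfolding offdiag_mutual_incoherence_def by (rule Max_ge) (auto simp: finite_setcompr_pairs)

lemma abs_inner_le_diag_mutual_incoherence:
  "\<bar>column i A \<bullet> column i B\<bar> \<le> diag_mutual_incoherence A B"
  unfolding diag_mutual_incoherence_def by (rule Max_ge) (auto simp: finite_setcompr_single)

lemma diag_mutual_incoherence_le_1: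
  assumes "\<forall>i. norm (column i A) = 1" and "\<forall>i. norm (column i B) = 1"
  shows "diag_mutual_incoherence A B \<le> 1"
proof -
  have "diag_mutual_incoherence A B \<in> {\<bar>column i A \<bullet> column i B\<bar> | i. True}"
    unfolding diag_mutual_incoherence_def by (rule Max_in) (auto simp: finite_setcompr_single)
  then obtain k where "diag_mutual_incoherence A B = \<bar>column k A \<bullet> column k B\<bar>" by auto
  with Cauchy_Schwarz_ineq2[of "column k A" "column k B"] assms show ?thesis by simp
qed

lemma norm_add_unit_vectors_squared:
  fixes a b :: "'a::real_inner"
  assumes "norm a = 1" and "norm b = 1"
  shows "(norm (a + b))\<^sup>2 = 2 + 2 * (a \<bullet> b)"
  using assms by (simp add: power2_norm_eq_inner norm_eq_1 inner_add_left inner_add_right inner_commute)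

lemma abs_inner_add_le:
  fixes a b c d :: "'a::real_inner"
  shows "\<bar>(a + b) \<bullet> (c + d)\<bar> \<le> \<bar>a \<bullet> c\<bar> + \<bar>a \<bullet> d\<bar> + \<bar>c \<bullet> b\<bar> + \<bar>b \<bullet> d\<bar>"
  by (simp add: inner_add_left inner_add_right inner_commute)

lemma sqrt_le_norm_add_column:
  fixes A B :: "real^'n::finite^'m::finite"
  assumes "\<forall>i. norm (column i A) = 1" and "\<forall>i. norm (column i B) = 1"
  shows "sqrt (2 * (1 - diag_mutual_incoherence A B)) \<le> norm (column i A + column i B)"
proof -
  have "2 * (1 - diag_mutual_incoherence A B) \<le> (norm (column i A + column i B))\<^sup>2"
    using norm_add_unit_vectors_squared[of "column i A" "column i B"] assms
      abs_inner_le_diag_mutual_incoherence[of i A B]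
    by (simp add: abs_le_iff)
  then show ?thesis using real_sqrt_le_mono by fastforce
qed

theorem theorem4p4:
  fixes A B :: "real^'n::finite^'m::finite"
  assumes "\<forall>i. norm (column i A) = 1"
    and "\<forall>i. norm (column i B) = 1"
    and "diag_mutual_incoherence A B \<noteq> 1"
  shows "mutual_incoherence (A + B) \<le>
    (mutual_incoherence A + 2 * offdiag_mutual_incoherence A B + mutual_incoherence B)
      / (2 * (1 - diag_mutual_incoherence A B))"
proof -
  let ?a = "\<lambda>i. column i A" and ?b = "\<lambda>i. column i B"
  define N where "N = mutual_incoherence A + 2 * offdiag_mutual_incoherence A B
    + mutual_incoherence B"
  define d where "d = 2 * (1 - diag_mutual_incoherence A B)"
  have "0 < d"
    using diag_mutual_incoherence_le_1[OF assms(1,2)] assms(3) by (simp add: d_def)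
  have "0 \<le> N"
    by (simp add: N_def mutual_incoherence_nonneg offdiag_mutual_incoherence_nonneg)
  moreover have "\<bar>(?a i + ?b i) \<bullet> (?a j + ?b j)\<bar> / (norm (?a i + ?b i) * norm (?a j + ?b j))
      \<le> N / d" if "i \<noteq> j" for i j
  proof (rule frac_le[OF \<open>0 \<le> N\<close> _ \<open>0 < d\<close>])
    show "\<bar>(?a i + ?b i) \<bullet> (?a j + ?b j)\<bar> \<le> N"
      using abs_inner_add_le[of "?a i" "?b i" "?a j" "?b j"] \<open>i \<noteq> j\<close>
        abs_inner_le_mutual_incoherence[OF assms(1) \<open>i \<noteq> j\<close>]
        abs_inner_le_mutual_incoherence[OF assms(2) \<open>i \<noteq> j\<close>]
        abs_inner_le_offdiag_mutual_incoherence[OF \<open>i \<noteq> j\<close>, of A B]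
        abs_inner_le_offdiag_mutual_incoherence[OF not_sym[OF \<open>i \<noteq> j\<close>], of A B]
      unfolding N_def by linarith
    have "sqrt d * sqrt d \<le> norm (?a i + ?b i) * norm (?a j + ?b j)"
      using sqrt_le_norm_add_column[OF assms(1,2)] \<open>0 < d\<close>
      by (intro mult_mono) (auto simp: d_def)
    then show "d \<le> norm (?a i + ?b i) * norm (?a j + ?b j)" using \<open>0 < d\<close> by simp
  qed
  ultimately show ?thesis
    unfolding N_def[symmetric] d_def[symmetric] using \<open>0 < d\<close>
    by (intro mutual_incoherence_le) (simp_all add: column_add)
qed

end
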